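(* Let $p$ be a prime, $n\in\mathbb{N}^*$ and $\sigma$ a $p$-uniform morphism on $\mathcal A_m$. Then $$\begin{pmatrix}P_{\sigma^n(0)}(T)\\ \vdots\\ P_{\sigma^n(m-1)}(T)\end{pmatrix}=M_\sigma(T^{p^{n-1}})M_\sigma(T^{p^{n-2}})\cdots M_\sigma(T)\begin{pmatrix}0\\1\\ \vdots\\ m-1\end{pmatrix}.$$
   Context: $\mathcal A_m=\{0,\dots,m-1\}$, letters viewed in $\mathbb{F}_p$. For $W=w_0\cdots w_{r-1}$, $P_W(T)=\sum_{j=0}^{r-1}w_{r-1-j}T^j$, and $\beta_{W,j}(T)=\sum_{i:\,w_i=j}T^{r-1-i}\in\mathbb{F}_p[T]$. $M_\sigma(T)=(\beta_{\sigma(i),j}(T))_{0\le i,j\le m-1}$. A $p$-uniform morphism sends each letter to a word of length $p$. *)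

theory Defs
  imports "Berlekamp_Zassenhaus.Finite_Field" "Jordan_Normal_Form.Matrix"
begin

definition morph_word :: "(nat \<Rightarrow> nat list) \<Rightarrow> nat list \<Rightarrow> nat list" where
  "morph_word \<sigma> w = concat (map \<sigma> w)"

definition p_uniform_morphism :: "nat \<Rightarrow> nat \<Rightarrow> (nat \<Rightarrow> nat list) \<Rightarrow> bool" where
  "p_uniform_morphism p m \<sigma> \<longleftrightarrow>
     (\<forall>a<m. length (\<sigma> a) = p \<and> set (\<sigma> a) \<subseteq> {..<m})"

definition P_word :: "nat list \<Rightarrow> 'a::comm_ring_1 poly" where
  "P_word W = (\<Sum>j<length W. monom (of_nat (W ! (length W - 1 - j))) j)"

definition beta_word :: "nat list \<Rightarrow> nat \<Rightarrow> 'a::comm_ring_1 poly" where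
  "beta_word W j = (\<Sum>i\<in>{i. i < length W \<and> W ! i = j}. monom 1 (length W - 1 - i))"

definition M_sigma :: "nat \<Rightarrow> (nat \<Rightarrow> nat list) \<Rightarrow> 'a::comm_ring_1 poly mat" where
  "M_sigma m \<sigma> = mat m m (\<lambda>(i, j). beta_word (\<sigma> i) j)"

definition M_sigma_subst :: "nat \<Rightarrow> (nat \<Rightarrow> nat list) \<Rightarrow> nat \<Rightarrow> 'a::comm_ring_1 poly mat" where
  "M_sigma_subst m \<sigma> k = map_mat (\<lambda>q. q \<circ>\<^sub>p monom 1 k) (M_sigma m \<sigma>)"

end

theory Submission
  imports Defs
begin

text \<open>Cutting \<open>\<sigma>\<^sup>n(W)\<close> into the blocks \<open>\<sigma>\<^sup>n(w\<^sub>i)\<close>, each of length \<open>p\<^sup>n\<close>, gives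
  \<open>P\<^bsub>\<sigma>\<^sup>n(W)\<^esub>(T) = \<Sum>\<^sub>j \<beta>\<^bsub>W,j\<^esub>(T^(p\<^sup>n)) P\<^bsub>\<sigma>\<^sup>n(j)\<^esub>(T)\<close>.
  For \<open>W = \<sigma>(a)\<close> this says that the vector \<open>(P\<^bsub>\<sigma>\<^sup>n\<^sup>+\<^sup>1(a)\<^esub>)\<^sub>a\<close> is \<open>M\<^sub>\<sigma>(T^(p\<^sup>n))\<close> times
  \<open>(P\<^bsub>\<sigma>\<^sup>n(a)\<^esub>)\<^sub>a\<close>, and induction on \<open>n\<close>, starting from \<open>(P\<^bsub>a\<^esub>)\<^sub>a = (0, \<dots>, m - 1)\<close>, yields the
  product formula. Neither the primality of \<open>p\<close>, nor the coefficient ring, nor \<open>n \<ge> 1\<close> plays a role.\<close>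

lemma pcompose_monom_one:
  "monom (1::'a::comm_ring_1) k \<circ>\<^sub>p monom 1 l = monom 1 (k * l)"
  by (induction k) (simp_all add: monom_Suc monom_0 mult_monom)

lemma morph_word_append: "morph_word \<sigma> (u @ v) = morph_word \<sigma> u @ morph_word \<sigma> v"
  by (simp add: morph_word_def)

lemma funpow_morph_word_Nil: "(morph_word \<sigma> ^^ n) [] = []"
  by (induction n) (simp_all add: morph_word_def)

lemma funpow_morph_word_append:
  "(morph_word \<sigma> ^^ n) (u @ v) = (morph_word \<sigma> ^^ n) u @ (morph_word \<sigma> ^^ n) v"
  by (induction n) (simp_all add: morph_word_append)

lemma funpow_morph_word_Cons:
  "(morph_word \<sigma> ^^ n) (a # v) = (morph_word \<sigma> ^^ n) [a] @ (morph_word \<sigma> ^^ n) v"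
  using funpow_morph_word_append[of n \<sigma> "[a]" v] by simp

lemma funpow_Suc_morph_word_singleton:
  "(morph_word \<sigma> ^^ Suc n) [a] = (morph_word \<sigma> ^^ n) (\<sigma> a)"
  by (simp add: funpow_Suc_right morph_word_def del: funpow.simps)

lemma set_morph_word_subset:
  assumes "p_uniform_morphism p m \<sigma>" "set w \<subseteq> {..<m}"
  shows "set (morph_word \<sigma> w) \<subseteq> {..<m}"
  using assms by (auto simp: morph_word_def p_uniform_morphism_def)

lemma length_morph_word:
  assumes "p_uniform_morphism p m \<sigma>" "set w \<subseteq> {..<m}"
  shows "length (morph_word \<sigma> w) = p * length w"
  using assms(2)
  by (induction w) (use assms(1) in \<open>simp_all add: morph_word_def p_uniform_morphism_def\<close>)

lemma set_funpow_morph_word_subset: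
  assumes "p_uniform_morphism p m \<sigma>" "set w \<subseteq> {..<m}"
  shows "set ((morph_word \<sigma> ^^ n) w) \<subseteq> {..<m}"
  by (induction n) (simp_all add: assms set_morph_word_subset[OF assms(1)])

lemma length_funpow_morph_word:
  assumes "p_uniform_morphism p m \<sigma>" "set w \<subseteq> {..<m}"
  shows "length ((morph_word \<sigma> ^^ n) w) = p ^ n * length w"
  by (induction n)
    (simp_all add: length_morph_word[OF assms(1) set_funpow_morph_word_subset[OF assms]])

lemma P_word_Nil: "P_word [] = 0"
  by (simp add: P_word_def)

lemma P_word_Cons: "P_word (a # w) = monom (of_nat a) (length w) + P_word w"
proof -
  have "P_word (a # w) =
      (\<Sum>j<length w. monom (of_nat ((a # w) ! (length w - j))) j) + monom (of_nat a) (length w)"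
    by (simp add: P_word_def)
  also have "(\<Sum>j<length w. monom (of_nat ((a # w) ! (length w - j))) j) = P_word w"
    unfolding P_word_def
  proof (rule sum.cong)
    fix j assume "j \<in> {..<length w}"
    then have "length w - j = Suc (length w - 1 - j)" by auto
    then show "monom (of_nat ((a # w) ! (length w - j))) j = monom (of_nat (w ! (length w - 1 - j))) j"
      by simp
  qed simp
  finally show ?thesis by (simp add: add.commute)
qed

lemma P_word_singleton: "P_word [a] = of_nat a"
  by (simp add: P_word_Cons P_word_Nil monom_0 of_nat_poly)

lemma P_word_append: "P_word (u @ v) = P_word u * monom 1 (length v) + P_word v"
  by (induction u) (simp_all add: P_word_Nil P_word_Cons mult_monom algebra_simps)

lemma beta_word_Nil: "beta_word [] j = 0"
  by (simp add: beta_word_def)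

lemma beta_word_eq_sum:
  "beta_word w j = (\<Sum>i<length w. if w ! i = j then monom 1 (length w - 1 - i) else 0)"
  unfolding beta_word_def sum.If_cases[OF finite_lessThan] by (simp add: Collect_conj_eq lessThan_def)

lemma beta_word_Cons:
  "beta_word (a # w) j = (if a = j then monom 1 (length w) else 0) + beta_word w j"
proof -
  have "beta_word (a # w) j =
      (\<Sum>i<Suc (length w). if (a # w) ! i = j then monom 1 (length (a # w) - 1 - i) else 0)"
    by (simp only: beta_word_eq_sum length_Cons)
  also have "\<dots> = (if a = j then monom 1 (length w) else 0) +
      (\<Sum>i<length w. if w ! i = j then monom 1 (length (a # w) - 1 - Suc i) else 0)"
    by (simp only: sum.lessThan_Suc_shift) simp
  also have "(\<Sum>i<length w. if w ! i = j then monom 1 (length (a # w) - 1 - Suc i) else 0) =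
      beta_word w j"
    unfolding beta_word_eq_sum by (rule sum.cong) auto
  finally show ?thesis .
qed

lemma P_word_funpow_morph_word:
  assumes "p_uniform_morphism p m \<sigma>" "set w \<subseteq> {..<m}"
  shows "(P_word ((morph_word \<sigma> ^^ n) w) :: 'a::comm_ring_1 poly) =
    (\<Sum>j<m. (beta_word w j \<circ>\<^sub>p monom 1 (p ^ n)) * P_word ((morph_word \<sigma> ^^ n) [j]))"
  using assms(2)
proof (induction w)
  case Nil
  show ?case by (simp add: funpow_morph_word_Nil P_word_Nil beta_word_Nil)
next
  case (Cons a w)
  then have "a < m" and w: "set w \<subseteq> {..<m}" by auto
  let ?P = "\<lambda>j. P_word ((morph_word \<sigma> ^^ n) [j]) :: 'a poly"
  have head: "?P a * monom 1 (p ^ n * length w) =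
      (\<Sum>j<m. ((if a = j then monom 1 (length w) else 0) \<circ>\<^sub>p monom 1 (p ^ n)) * ?P j)"
  proof -
    have "(\<Sum>j<m. ((if a = j then monom 1 (length w) else 0) \<circ>\<^sub>p monom 1 (p ^ n)) * ?P j) =
        (\<Sum>j<m. if j = a then monom 1 (length w * p ^ n) * ?P j else 0)"
      by (rule sum.cong) (auto simp: pcompose_monom_one)
    also have "\<dots> = ?P a * monom 1 (p ^ n * length w)"
      using \<open>a < m\<close> by (simp add: mult.commute)
    finally show ?thesis ..
  qed
  have "P_word ((morph_word \<sigma> ^^ n) (a # w)) = ?P a * monom 1 (p ^ n * length w) +
      P_word ((morph_word \<sigma> ^^ n) w)"
    by (subst funpow_morph_word_Cons)
      (simp only: P_word_append length_funpow_morph_word[OF assms(1) w] length_Cons mult_1_right)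
  then show ?case
    by (simp add: head Cons.IH[OF w] beta_word_Cons pcompose_add distrib_right sum.distrib)
qed

lemma M_sigma_subst_carrier: "M_sigma_subst m \<sigma> k \<in> carrier_mat m m"
  by (simp add: M_sigma_subst_def M_sigma_def)

lemma M_sigma_subst_mult_vec_nth:
  assumes "a < m"
  shows "(M_sigma_subst m \<sigma> k *\<^sub>v vec m f) $ a = (\<Sum>j<m. (beta_word (\<sigma> a) j \<circ>\<^sub>p monom 1 k) * f j)"
  using assms by (simp add: M_sigma_subst_def M_sigma_def scalar_prod_def lessThan_atLeast0)

lemma M_sigma_subst_mult_P_word_vec:
  assumes "p_uniform_morphism p m \<sigma>"
  shows "M_sigma_subst m \<sigma> (p ^ n) *\<^sub>v vec m (\<lambda>a. P_word ((morph_word \<sigma> ^^ n) [a])) =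
    vec m (\<lambda>a. P_word ((morph_word \<sigma> ^^ Suc n) [a]))"
proof (rule eq_vecI)
  fix a assume "a < dim_vec (vec m (\<lambda>a. P_word ((morph_word \<sigma> ^^ Suc n) [a]) :: 'a::comm_ring_1 poly))"
  then have "a < m" by simp
  then have "set (\<sigma> a) \<subseteq> {..<m}"
    using assms by (auto simp: p_uniform_morphism_def)
  with \<open>a < m\<close> show "(M_sigma_subst m \<sigma> (p ^ n) *\<^sub>v vec m (\<lambda>a. P_word ((morph_word \<sigma> ^^ n) [a]))) $ a =
      vec m (\<lambda>a. P_word ((morph_word \<sigma> ^^ Suc n) [a]) :: 'a poly) $ a"
    by (simp only: M_sigma_subst_mult_vec_nth index_vec funpow_Suc_morph_word_singleton
        P_word_funpow_morph_word[OF assms])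
qed (simp add: M_sigma_subst_def M_sigma_def)

lemma M_sigma_subst_product_carrier:
  "foldr (*) (map (\<lambda>k. M_sigma_subst m \<sigma> (p ^ k)) ks) (1\<^sub>m m) \<in> carrier_mat m m"
  by (induction ks) (auto intro: mult_carrier_mat M_sigma_subst_carrier)

lemma P_word_funpow_morph_word_vec:
  assumes "p_uniform_morphism p m \<sigma>"
  shows "vec m (\<lambda>a. P_word ((morph_word \<sigma> ^^ n) [a]) :: 'a::comm_ring_1 poly) =
    foldr (*) (map (\<lambda>k. M_sigma_subst m \<sigma> (p ^ k)) (rev [0..<n])) (1\<^sub>m m) *\<^sub>v vec m of_nat"
proof (induction n)
  case 0
  show ?case by (rule eq_vecI) (simp_all add: P_word_singleton)
next
  case (Suc n)
  let ?F = "foldr (*) (map (\<lambda>k. M_sigma_subst m \<sigma> (p ^ k)) (rev [0..<n])) (1\<^sub>m m) :: 'a poly mat"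
  have "foldr (*) (map (\<lambda>k. M_sigma_subst m \<sigma> (p ^ k)) (rev [0..<Suc n])) (1\<^sub>m m) *\<^sub>v vec m of_nat =
      M_sigma_subst m \<sigma> (p ^ n) *\<^sub>v (?F *\<^sub>v vec m of_nat)"
    by (simp add: assoc_mult_mat_vec[OF M_sigma_subst_carrier M_sigma_subst_product_carrier])
  also have "\<dots> = vec m (\<lambda>a. P_word ((morph_word \<sigma> ^^ Suc n) [a]))"
    by (simp add: Suc.IH[symmetric] M_sigma_subst_mult_P_word_vec[OF assms])
  finally show ?case ..
qed

theorem corollary4p11:
  fixes \<sigma> :: "nat \<Rightarrow> nat list" and m n :: nat
  assumes "p = CARD('p::prime_card)"
    and "n \<ge> 1"
    and "p_uniform_morphism p m \<sigma>"
  shows "vec m (\<lambda>a. (P_word ((morph_word \<sigma> ^^ n) [a]) :: 'p mod_ring poly)) =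
    foldr (*) (map (\<lambda>k. M_sigma_subst m \<sigma> (p ^ k)) (rev [0..<n])) (1\<^sub>m m)
      *\<^sub>v vec m (\<lambda>j. of_nat j)"
  by (rule P_word_funpow_morph_word_vec[OF assms(3)])

end
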